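(* Let $G$ be a $2K_2$-free graph on $n$ vertices, and let $\alpha(G)$ be its independence number. Then the set $\{x\in V(G) \mid d_G(x)\le \frac{n-\alpha(G)}{2}\}$ is an independent set in $G$.
   Context: All graphs are finite, simple and undirected. A graph is $2K_2$-free if it does not contain $2K_2$ (the graph on four vertices consisting of two independent edges) as an induced subgraph. $d_G(x)$ is the degree of $x$ in $G$ and $\alpha(G)$ is the maximum size of an independent set in $G$. *)

theory Defs
  imports Complex_Main
begin

definition simple_graph :: "'a set \<Rightarrow> ('a \<Rightarrow> 'a \<Rightarrow> bool) \<Rightarrow> bool" where
  "simple_graph V E \<longleftrightarrow> finite V \<and> (\<forall>x y. E x y \<longrightarrow> E y x)
     \<and> (\<forall>x. \<not> E x x) \<and> (\<forall>x y. E x y \<longrightarrow> x \<in> V \<and> y \<in> V)"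

definition independent_set :: "'a set \<Rightarrow> ('a \<Rightarrow> 'a \<Rightarrow> bool) \<Rightarrow> 'a set \<Rightarrow> bool" where
  "independent_set V E S \<longleftrightarrow> S \<subseteq> V \<and> (\<forall>x\<in>S. \<forall>y\<in>S. \<not> E x y)"

definition independence_number :: "'a set \<Rightarrow> ('a \<Rightarrow> 'a \<Rightarrow> bool) \<Rightarrow> nat" where
  "independence_number V E = Max {card S | S. independent_set V E S}"

definition degree :: "'a set \<Rightarrow> ('a \<Rightarrow> 'a \<Rightarrow> bool) \<Rightarrow> 'a \<Rightarrow> nat" where
  "degree V E x = card {y \<in> V. E x y}"

definition two_K2_free :: "'a set \<Rightarrow> ('a \<Rightarrow> 'a \<Rightarrow> bool) \<Rightarrow> bool" where
  "two_K2_free V E \<longleftrightarrow> \<not> (\<exists>a\<in>V. \<exists>b\<in>V. \<exists>c\<in>V. \<exists>d\<in>V.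
     distinct [a, b, c, d] \<and> E a b \<and> E c d \<and>
     \<not> E a c \<and> \<not> E a d \<and> \<not> E b c \<and> \<not> E b d)"

end

theory Submission
  imports Defs
begin

text \<open>If \<open>xy\<close> is an edge of a \<open>2K\<^sub>2\<close>-free graph, the vertices adjacent to neither
  \<open>x\<close> nor \<open>y\<close> form an independent set, and \<open>x\<close> can be added to it. Hence
  \<open>\<alpha>(G) \<ge> n - |N(x) \<union> N(y)| + 1 \<ge> n - d(x) - d(y) + 1\<close>, so the degrees of two
  adjacent vertices cannot both be at most \<open>(n - \<alpha>(G))/2\<close>.\<close>

definition neighbourhood :: "'a set \<Rightarrow> ('a \<Rightarrow> 'a \<Rightarrow> bool) \<Rightarrow> 'a \<Rightarrow> 'a set" where
  "neighbourhood V E x = {y \<in> V. E x y}"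

lemma degree_eq_card_neighbourhood: "degree V E x = card (neighbourhood V E x)"
  unfolding degree_def neighbourhood_def ..

lemma independent_set_card_le_independence_number:
  assumes "finite V" and "independent_set V E S"
  shows "card S \<le> independence_number V E"
proof -
  have "{card S | S. independent_set V E S} \<subseteq> card ` Pow V"
    unfolding independent_set_def by auto
  then have "finite {card S | S. independent_set V E S}"
    using \<open>finite V\<close> by (meson finite_Pow_iff finite_imageI finite_subset)
  then show ?thesis
    unfolding independence_number_def using assms(2) by (auto intro: Max_ge)
qed

lemma independent_set_insert:
  assumes "independent_set V E S" and "x \<in> V" and "\<not> E x x"
    and "\<And>y. y \<in> S \<Longrightarrow> \<not> E x y \<and> \<not> E y x"
  shows "independent_set V E (insert x S)"
  using assms unfolding independent_set_def by auto

lemma two_K2_free_non_neighbours_independent: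
  assumes "simple_graph V E" and "two_K2_free V E" and "E x y"
  shows "independent_set V E (V - (neighbourhood V E x \<union> neighbourhood V E y))"
  unfolding independent_set_def
proof (intro conjI ballI notI)
  fix u v
  assume u: "u \<in> V - (neighbourhood V E x \<union> neighbourhood V E y)"
    and v: "v \<in> V - (neighbourhood V E x \<union> neighbourhood V E y)" and "E u v"
  have "\<not> E x u" "\<not> E x v" "\<not> E y u" "\<not> E y v" "u \<in> V" "v \<in> V"
    using u v unfolding neighbourhood_def by auto
  moreover have "x \<in> V" "y \<in> V" "\<And>a b. E a b \<Longrightarrow> E b a" "\<And>a. \<not> E a a"
    using assms(1,3) unfolding simple_graph_def by auto
  ultimately have "distinct [x, y, u, v]"
    using \<open>E x y\<close> \<open>E u v\<close> by auto
  then show False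
    using assms(2) \<open>E x y\<close> \<open>E u v\<close> \<open>\<not> E x u\<close> \<open>\<not> E x v\<close> \<open>\<not> E y u\<close> \<open>\<not> E y v\<close>
      \<open>x \<in> V\<close> \<open>y \<in> V\<close> \<open>u \<in> V\<close> \<open>v \<in> V\<close>
    unfolding two_K2_free_def by blast
qed auto

lemma two_K2_free_edge_degree_sum:
  assumes "simple_graph V E" and "two_K2_free V E" and "E x y"
  shows "card V < degree V E x + degree V E y + independence_number V E"
proof -
  let ?N = "neighbourhood V E x \<union> neighbourhood V E y"
  let ?S = "V - ?N"
  have fin: "finite V" and sym: "\<And>a b. E a b \<Longrightarrow> E b a" and loopless: "\<And>a. \<not> E a a"
    and "x \<in> V" "y \<in> V"
    using assms(1,3) unfolding simple_graph_def by auto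
  have "x \<in> ?N"
    using \<open>x \<in> V\<close> sym[OF \<open>E x y\<close>] unfolding neighbourhood_def by auto
  have "independent_set V E (insert x ?S)"
    using two_K2_free_non_neighbours_independent[OF assms] \<open>x \<in> V\<close> loopless sym
    by (intro independent_set_insert) (auto simp: neighbourhood_def)
  then have "card (insert x ?S) \<le> independence_number V E"
    by (rule independent_set_card_le_independence_number[OF fin])
  moreover have "card (insert x ?S) = card V - card ?N + 1"
    using fin \<open>x \<in> ?N\<close> by (simp add: card_Diff_subset neighbourhood_def)
  moreover have "card ?N \<le> card V"
    using fin by (intro card_mono) (auto simp: neighbourhood_def)
  moreover have "card ?N \<le> degree V E x + degree V E y"
    unfolding degree_eq_card_neighbourhood by (rule card_Un_le)
  ultimately show ?thesis by linarith
qed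

theorem lemma10:
  fixes V :: "'a set" and E :: "'a \<Rightarrow> 'a \<Rightarrow> bool"
  assumes "simple_graph V E" and "two_K2_free V E"
  shows "independent_set V E
    {x \<in> V. real (degree V E x) \<le> (real (card V) - real (independence_number V E)) / 2}"
proof -
  let ?bound = "(real (card V) - real (independence_number V E)) / 2"
  have "\<not> E x y" if "real (degree V E x) \<le> ?bound" "real (degree V E y) \<le> ?bound" for x y
  proof
    assume "E x y"
    with assms have "card V < degree V E x + degree V E y + independence_number V E"
      by (rule two_K2_free_edge_degree_sum)
    with that show False by simp
  qed
  then show ?thesis
    unfolding independent_set_def by auto
qed

end
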